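(* Let $d \ge 2$ and $\lambda > 0$. Consider the TransE model, in which each entity $e$ is assigned a vector $\vec{e} \in \mathbb{R}^d$ and each relation $r$ a vector $\vec{r} \in \mathbb{R}^d$, and declare a fact $(e_1, r, e_2)$ valid, i.e. $(e_1,r,e_2) \in P$, if and only if $\|\vec{e_1} + \vec{r} - \vec{e_2}\| \le \lambda$ (Euclidean norm). Then none of the following three implications holds for all TransE embeddings: (R1) if $r$ is reflexive on a set $\Delta$ of entities, then $r$ is symmetric on $\Delta$; (R2) if $r$ is reflexive on a set $\Delta$ of entities, then $r$ is transitive on $\Delta$; (R3) if an entity $e_1$ has relation $r$ with every entity in a set $\Delta$ of entities and an entity $e_2$ has relation $r$ with one of the entities in $\Delta$, then $e_2$ has relation $r$ with every entity in $\Delta$. That is, for each of (R1), (R2), (R3) there exist entity vectors and a relation vector in $\mathbb{R}^d$ such that, with $P$ defined by the threshold $\lambda$, the hypothesis of the implication is satisfied but its conclusion fails.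
   Context: A relation $r$ is reflexive on a set $E$ of entities if $(e,r,e) \in P$ for all $e \in E$; symmetric on $E$ if $(e_1,r,e_2)\in P \iff (e_2,r,e_1)\in P$ for all $e_1,e_2 \in E$; transitive on $E$ if $(e_1,r,e_2)\in P$ and $(e_2,r,e_3)\in P$ imply $(e_1,r,e_3)\in P$ for all $e_1,e_2,e_3 \in E$. The TransE implausibility score of a fact $(s,r,o)$ is $\|\vec{s}+\vec{r}-\vec{o}\|$. *)

theory Defs
  imports "HOL-Analysis.Analysis"
begin

definition transE_holds :: "real \<Rightarrow> ('e \<Rightarrow> real^'n) \<Rightarrow> real^'n \<Rightarrow> 'e \<Rightarrow> 'e \<Rightarrow> bool" where
  "transE_holds lam emb rv e1 e2 \<longleftrightarrow> norm (emb e1 + rv - emb e2) \<le> lam"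

definition reflexive_on :: "'e set \<Rightarrow> ('e \<Rightarrow> 'e \<Rightarrow> bool) \<Rightarrow> bool" where
  "reflexive_on E P \<longleftrightarrow> (\<forall>e\<in>E. P e e)"

definition symmetric_on :: "'e set \<Rightarrow> ('e \<Rightarrow> 'e \<Rightarrow> bool) \<Rightarrow> bool" where
  "symmetric_on E P \<longleftrightarrow> (\<forall>e1\<in>E. \<forall>e2\<in>E. P e1 e2 \<longleftrightarrow> P e2 e1)"

definition transitive_on :: "'e set \<Rightarrow> ('e \<Rightarrow> 'e \<Rightarrow> bool) \<Rightarrow> bool" where
  "transitive_on E P \<longleftrightarrow> (\<forall>e1\<in>E. \<forall>e2\<in>E. \<forall>e3\<in>E. P e1 e2 \<longrightarrow> P e2 e3 \<longrightarrow> P e1 e3)"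

end

theory Submission
  imports Defs
begin

text \<open>All three counterexamples live on one line \<open>\<real> u\<close> with \<open>norm u = 1\<close>, where the
  TransE score of \<open>(a, r, b)\<close> is just \<open>\<bar>f a + c - f b\<bar>\<close>.  With relation offset \<open>c = \<lambda>\<close>,
  the entities \<open>0\<close> and \<open>\<lambda>\<close> are each related to themselves and \<open>0\<close> to \<open>\<lambda>\<close>, but \<open>\<lambda>\<close> is at
  distance \<open>2\<lambda>\<close> from \<open>0\<close>.  With \<open>c = 0\<close> the relation is "at distance at most \<open>\<lambda>\<close>", which is
  reflexive but not transitive on \<open>0, \<lambda>, 2\<lambda>\<close>; and \<open>\<lambda>/2\<close> is related to both \<open>0\<close> and \<open>\<lambda>\<close>, while
  \<open>-\<lambda>\<close> is related to \<open>0\<close> only.\<close>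

lemma transE_holds_on_line:
  fixes u :: "real^'n"
  assumes "norm u = 1"
  shows "transE_holds lam (\<lambda>e. f e *\<^sub>R u) (c *\<^sub>R u) a b \<longleftrightarrow> \<bar>f a + c - f b\<bar> \<le> lam"
proof -
  have "f a *\<^sub>R u + c *\<^sub>R u - f b *\<^sub>R u = (f a + c - f b) *\<^sub>R u"
    by (simp add: algebra_simps)
  then show ?thesis
    using assms by (simp add: transE_holds_def)
qed

lemma ex_unit_vector: "\<exists>u :: real^'n. norm u = 1"
  by (meson norm_axis_1)

lemma transE_reflexive_not_symmetric:
  assumes "lam > 0"
  shows "\<exists>(emb :: nat \<Rightarrow> real^'n) rv D.
           reflexive_on D (transE_holds lam emb rv) \<and> \<not> symmetric_on D (transE_holds lam emb rv)"
proof -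
  obtain u :: "real^'n" where u: "norm u = 1"
    using ex_unit_vector by blast
  define f :: "nat \<Rightarrow> real" where "f n = (if n = 0 then 0 else lam)" for n
  have "reflexive_on {0, 1} (transE_holds lam (\<lambda>e. f e *\<^sub>R u) (lam *\<^sub>R u))"
    unfolding reflexive_on_def transE_holds_on_line[OF u] f_def using assms by auto
  moreover have "\<not> symmetric_on {0, 1} (transE_holds lam (\<lambda>e. f e *\<^sub>R u) (lam *\<^sub>R u))"
    unfolding symmetric_on_def transE_holds_on_line[OF u] f_def using assms by auto
  ultimately show ?thesis
    by blast
qed

lemma transE_reflexive_not_transitive:
  assumes "lam > 0"
  shows "\<exists>(emb :: nat \<Rightarrow> real^'n) rv D.
           reflexive_on D (transE_holds lam emb rv) \<and> \<not> transitive_on D (transE_holds lam emb rv)"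
proof -
  obtain u :: "real^'n" where u: "norm u = 1"
    using ex_unit_vector by blast
  let ?P = "transE_holds lam (\<lambda>n. (real n * lam) *\<^sub>R u) (0 *\<^sub>R u)"
  have "reflexive_on {0, 1, 2} ?P"
    unfolding reflexive_on_def transE_holds_on_line[OF u] using assms by auto
  moreover have "?P 0 1" "?P 1 2" "\<not> ?P 0 2"
    unfolding transE_holds_on_line[OF u] using assms by auto
  then have "\<not> transitive_on {0, 1, 2} ?P"
    unfolding transitive_on_def by blast
  ultimately show ?thesis
    by blast
qed

lemma transE_not_all_related:
  assumes "lam > 0"
  shows "\<exists>(emb :: nat \<Rightarrow> real^'n) rv D e1 e2.
           (\<forall>e\<in>D. transE_holds lam emb rv e1 e) \<and>
           (\<exists>e\<in>D. transE_holds lam emb rv e2 e) \<and>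
           \<not> (\<forall>e\<in>D. transE_holds lam emb rv e2 e)"
proof -
  obtain u :: "real^'n" where u: "norm u = 1"
    using ex_unit_vector by blast
  define f :: "nat \<Rightarrow> real" where
    "f n = (if n = 0 then 0 else if n = 1 then lam else if n = 2 then lam / 2 else - lam)" for n
  let ?P = "transE_holds lam (\<lambda>e. f e *\<^sub>R u) (0 *\<^sub>R u)"
  have "\<forall>e\<in>{0, 1}. ?P 2 e" "?P 3 0" "\<not> ?P 3 1"
    unfolding transE_holds_on_line[OF u] f_def using assms by auto
  then show ?thesis
    by blast
qed

theorem lemma1:
  fixes lam :: real
  assumes "CARD('n::finite) \<ge> 2" and "lam > 0"
  shows "(\<exists>(emb :: nat \<Rightarrow> real^'n) (rv :: real^'n) (D :: nat set).
            reflexive_on D (transE_holds lam emb rv) \<and>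
            \<not> symmetric_on D (transE_holds lam emb rv))
       \<and> (\<exists>(emb :: nat \<Rightarrow> real^'n) (rv :: real^'n) (D :: nat set).
            reflexive_on D (transE_holds lam emb rv) \<and>
            \<not> transitive_on D (transE_holds lam emb rv))
       \<and> (\<exists>(emb :: nat \<Rightarrow> real^'n) (rv :: real^'n) (D :: nat set) (e1 :: nat) (e2 :: nat).
            (\<forall>e\<in>D. transE_holds lam emb rv e1 e) \<and>
            (\<exists>e\<in>D. transE_holds lam emb rv e2 e) \<and>
            \<not> (\<forall>e\<in>D. transE_holds lam emb rv e2 e))"
  using transE_reflexive_not_symmetric[OF \<open>lam > 0\<close>]
    transE_reflexive_not_transitive[OF \<open>lam > 0\<close>]
    transE_not_all_related[OF \<open>lam > 0\<close>]
  by blast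

end
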